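(* Let $u$ be a node with a set of incident directed edges $(u,v)$, each with identifier $\mathrm{id}(u,v)=\mathrm{id}(u)\circ\mathrm{id}(v)$ (concatenation); each such edge is blue if $v$ is playing and red otherwise, and $u$ does not know which edges are blue. Let $h_1,\dots,h_s$ be independent, perfectly random hash functions mapping edges to $[q]=\{0,\dots,q-1\}$ (the trials); an edge participates in trial $i$ if $h_j(e)=i$ for some $j$. For each trial $i$, $u$ knows $X(i)$ (the XOR of identifiers of all its edges participating in trial $i$), $x(i)$ (their number), $X'(i)$ (the XOR of identifiers of its blue edges participating in trial $i$) and $x'(i)$ (their number). Node $u$ repeatedly does the following while possible: find a trial $i$ with $x(i)=x'(i)+1$, identify the red edge with identifier $X(i)\oplus X'(i)$, and for every trial $i'$ in which this edge participates replace $X(i')$ by $X(i')\oplus$ (its identifier) and decrease $x(i')$ by $1$. Suppose $u$ is incident to at most $p$ red edges, $s\ge 4$ and $q\ge 4esp$. Then for every positive integer $k$, \[ \Pr[u\text{ fails to identify at least }k\text{ red edges}]\le 2\left(\frac{2sk}{q}\right)^{(s-2)k/2}. \]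
   Context: This is the analysis of an identification procedure in which a node $u$ wants to learn which of its neighbors belong to a set of "playing" nodes; the values $X'(i),x'(i)$ are assumed to be delivered to $u$ correctly. "Fails to identify" refers to red edges that remain unidentified when the procedure stops. *)

theory Defs
  imports "HOL-Probability.Probability"
begin

text \<open>Hash functions: H j e is the value of the hash function h_j (j < s) on edge e;
  the s hash functions are independent, perfectly random functions E \<rightarrow> [q],
  i.e. H is drawn uniformly from the following finite set.\<close>
definition hash_space :: "'e set \<Rightarrow> nat \<Rightarrow> nat \<Rightarrow> (nat \<Rightarrow> 'e \<Rightarrow> nat) set" where
  "hash_space E s q = PiE {..<s} (\<lambda>_. PiE E (\<lambda>_. {..<q}))"

definition participates :: "nat \<Rightarrow> (nat \<Rightarrow> 'e \<Rightarrow> nat) \<Rightarrow> 'e \<Rightarrow> nat \<Rightarrow> bool" where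
  "participates s H e i \<longleftrightarrow> (\<exists>j<s. H j e = i)"

text \<open>One step of the identification procedure, on the set S of still unidentified red
  edges: a trial i with x(i) = x'(i) + 1 is exactly a trial in which exactly one
  unidentified red edge participates; that edge e (whose identifier is X(i) xor X'(i))
  gets identified and removed.\<close>
definition peel_step :: "nat \<Rightarrow> (nat \<Rightarrow> 'e \<Rightarrow> nat) \<Rightarrow> 'e set \<Rightarrow> 'e set \<Rightarrow> bool" where
  "peel_step s H S S' \<longleftrightarrow>
     (\<exists>e\<in>S. S' = S - {e} \<and>
        (\<exists>i. participates s H e i \<and> {e'\<in>S. participates s H e' i} = {e}))"

definition stuck :: "nat \<Rightarrow> (nat \<Rightarrow> 'e \<Rightarrow> nat) \<Rightarrow> 'e set \<Rightarrow> bool" where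
  "stuck s H S \<longleftrightarrow> \<not> (\<exists>S'. peel_step s H S S')"

definition fails_at_least :: "'e set \<Rightarrow> nat \<Rightarrow> (nat \<Rightarrow> 'e \<Rightarrow> nat) \<Rightarrow> nat \<Rightarrow> bool" where
  "fails_at_least R s H k \<longleftrightarrow>
     (\<exists>S. (peel_step s H)\<^sup>*\<^sup>* R S \<and> stuck s H S \<and> card S \<ge> k)"

end

(* If the procedure gets stuck with a set S of t >= k unidentified red edges, then every trial
   touched by S is touched by at least two edges of S, so the s t hash values of the edges of S
   lie in a set M of floor(s t / 2) trials. A union bound over S and M bounds the failure
   probability by the sum over t >= k of C(|R|, t) C(q, floor(s t / 2)) (floor(s t / 2) / q)^(s t).
   With C(n, m) <= (e n / m)^m and q >= 4 e s p, the t-th term is at most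
   2^(-t) (2 s k / q)^((s - 2) k / 2), and the geometric factors sum to at most 2. *)

theory Submission
  imports Defs
begin

definition touched_trials :: "nat \<Rightarrow> (nat \<Rightarrow> 'e \<Rightarrow> nat) \<Rightarrow> 'e set \<Rightarrow> nat set" where
  "touched_trials s H S = {i. \<exists>e\<in>S. participates s H e i}"

lemma peel_reachable_subset: "(peel_step s H)\<^sup>*\<^sup>* R S \<Longrightarrow> S \<subseteq> R"
  by (induction rule: rtranclp_induct) (auto simp: peel_step_def)

lemma stuck_trial_shared:
  assumes "stuck s H S" and "e \<in> S" and "participates s H e i"
  shows "\<exists>e'\<in>S. e' \<noteq> e \<and> participates s H e' i"
proof (rule ccontr)
  assume "\<not> ?thesis"
  then have "peel_step s H S (S - {e})"
    using assms(2,3) unfolding peel_step_def by blast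
  then show False using assms(1) by (simp add: stuck_def)
qed

lemma stuck_card_touched_trials:
  assumes "finite S" and "stuck s H S"
  shows "2 * card (touched_trials s H S) \<le> s * card S"
proof -
  define U where "U = touched_trials s H S"
  define edges_in where "edges_in i = {e\<in>S. participates s H e i}" for i
  have U_eq: "U = (\<Union>e\<in>S. (\<lambda>j. H j e) ` {..<s})"
    by (auto simp: U_def touched_trials_def participates_def)
  have "2 * card U = (\<Sum>i\<in>U. 2)" by simp
  also have "\<dots> \<le> (\<Sum>i\<in>U. card (edges_in i))"
  proof (rule sum_mono)
    fix i assume "i \<in> U"
    then obtain e where e: "e \<in> S" "participates s H e i"
      by (auto simp: U_def touched_trials_def)
    then obtain e' where "e' \<in> S" "e' \<noteq> e" "participates s H e' i"
      using stuck_trial_shared[OF assms(2)] by blast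
    with e have "card {e, e'} \<le> card (edges_in i)"
      using assms(1) by (intro card_mono) (auto simp: edges_in_def)
    with \<open>e' \<noteq> e\<close> show "2 \<le> card (edges_in i)" by simp
  qed
  also have "\<dots> = (\<Sum>e\<in>S. card {i\<in>U. participates s H e i})"
    unfolding edges_in_def using assms(1) U_eq by (intro sum_multicount_gen[symmetric]) auto
  also have "\<dots> \<le> (\<Sum>e\<in>S. s)"
  proof (rule sum_mono)
    fix e
    have "{i\<in>U. participates s H e i} \<subseteq> (\<lambda>j. H j e) ` {..<s}"
      by (auto simp: participates_def)
    then have "card {i\<in>U. participates s H e i} \<le> card ((\<lambda>j. H j e) ` {..<s})"
      by (intro card_mono) auto
    also have "\<dots> \<le> s"
      using card_image_le[of "{..<s}" "\<lambda>j. H j e"] by simp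
    finally show "card {i\<in>U. participates s H e i} \<le> s" .
  qed
  finally show ?thesis by (simp add: U_def mult.commute)
qed

definition hashes_within :: "nat \<Rightarrow> 'e set \<Rightarrow> nat set \<Rightarrow> (nat \<Rightarrow> 'e \<Rightarrow> nat) set" where
  "hashes_within s S M = {H. \<forall>j<s. \<forall>e\<in>S. H j e \<in> M}"

lemma fails_at_least_imp_hashes_within:
  assumes "finite R" and "R \<subseteq> E" and "H \<in> hash_space E s q" and "s * card R \<le> q"
    and "fails_at_least R s H k"
  obtains S M where "S \<subseteq> R" and "k \<le> card S" and "M \<subseteq> {..<q}" and "card M = s * card S div 2"
    and "H \<in> hashes_within s S M"
proof -
  obtain S where reach: "(peel_step s H)\<^sup>*\<^sup>* R S" and "stuck s H S" and "k \<le> card S"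
    using assms(5) by (auto simp: fails_at_least_def)
  have "S \<subseteq> R" using peel_reachable_subset[OF reach] .
  then have "finite S" using assms(1) finite_subset by blast
  define U where "U = touched_trials s H S"
  have "2 * card U \<le> s * card S"
    using stuck_card_touched_trials[OF \<open>finite S\<close> \<open>stuck s H S\<close>] by (simp add: U_def)
  then have "card U \<le> s * card S div 2" by linarith
  have "card S \<le> card R" using \<open>S \<subseteq> R\<close> assms(1) by (rule card_mono[rotated])
  then have "s * card S \<le> q" using assms(4) by (meson mult_le_mono2 le_trans)
  then have "s * card S div 2 \<le> card {..<q}" by (metis card_lessThan div_le_dividend le_trans)
  have "H j e < q" if "j < s" and "e \<in> E" for j e
    using assms(3) that by (auto simp: hash_space_def PiE_iff)
  then have "U \<subseteq> {..<q}"
    using \<open>S \<subseteq> R\<close> assms(2) by (auto simp: U_def touched_trials_def participates_def)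
  \<comment> \<open>padding U to exactly floor(s t / 2) trials lets the union bound range over sets M of one size\<close>
  then obtain M where "U \<subseteq> M" "M \<subseteq> {..<q}" "card M = s * card S div 2"
    using exists_subset_between \<open>card U \<le> s * card S div 2\<close> \<open>s * card S div 2 \<le> card {..<q}\<close>
    by (metis finite_lessThan)
  moreover have "H \<in> hashes_within s S M"
    using \<open>U \<subseteq> M\<close> by (auto simp: hashes_within_def U_def touched_trials_def participates_def)
  ultimately show ?thesis using that \<open>S \<subseteq> R\<close> \<open>k \<le> card S\<close> by blast
qed

lemma card_hash_space_Int_hashes_within:
  assumes "finite E" and "S \<subseteq> E" and "M \<subseteq> {..<q}"
  shows "card (hash_space E s q \<inter> hashes_within s S M)
           = (card M ^ card S * q ^ (card E - card S)) ^ s"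
proof -
  have space_eq: "hash_space E s q \<inter> hashes_within s S M
          = PiE {..<s} (\<lambda>_. PiE E (\<lambda>e. if e \<in> S then M else {..<q}))"
    using assms(2,3) by (auto simp: hash_space_def hashes_within_def PiE_iff; metis lessThan_iff subsetD)
  have "(\<Prod>e\<in>E. card (if e \<in> S then M else {..<q}))
      = (\<Prod>e\<in>E - S. card (if e \<in> S then M else {..<q}))
        * (\<Prod>e\<in>S. card (if e \<in> S then M else {..<q}))"
    by (rule prod.subset_diff[OF assms(2,1)])
  also have "\<dots> = card M ^ card S * q ^ (card E - card S)"
    using assms(1,2) by (simp add: card_Diff_subset finite_subset)
  finally show ?thesis using assms(1) by (simp add: space_eq card_PiE)
qed

lemma finite_hash_space: "finite E \<Longrightarrow> finite (hash_space E s q)"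
  by (simp add: hash_space_def finite_PiE)

lemma hash_space_nonempty: "0 < q \<Longrightarrow> hash_space E s q \<noteq> {}"
  by (auto simp: hash_space_def PiE_eq_empty_iff)

lemma prob_hashes_within:
  assumes "finite E" and "S \<subseteq> E" and "M \<subseteq> {..<q}" and "0 < q"
  shows "measure_pmf.prob (pmf_of_set (hash_space E s q)) (hashes_within s S M)
           = (real (card M) / real q) ^ (s * card S)"
proof -
  have "finite (hash_space E s q)" using assms(1) by (rule finite_hash_space)
  moreover have "hash_space E s q \<noteq> {}" using assms(4) by (rule hash_space_nonempty)
  moreover have "card (hash_space E s q) = (q ^ card E) ^ s"
    using assms(1) by (simp add: hash_space_def card_PiE)
  moreover obtain n where "card E = card S + n"
    using card_mono[OF assms(1,2)] le_Suc_ex by blast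
  ultimately show ?thesis
    using card_hash_space_Int_hashes_within[OF assms(1-3), of s] assms(4)
    by (simp add: measure_pmf_of_set power_add power_mult_distrib power_divide mult.commute[of s] power_mult)
qed

lemma prob_some_hashes_within_le:
  assumes "finite E" and "R \<subseteq> E" and "0 < q"
  shows "measure_pmf.prob (pmf_of_set (hash_space E s q))
           (\<Union>S\<in>{S. S \<subseteq> R \<and> card S = t}.
              \<Union>M\<in>{M. M \<subseteq> {..<q} \<and> card M = m}. hashes_within s S M)
         \<le> real (card R choose t) * real (q choose m) * (real m / real q) ^ (s * t)"
proof -
  let ?P = "measure_pmf.prob (pmf_of_set (hash_space E s q))"
  let ?SS = "{S. S \<subseteq> R \<and> card S = t}" and ?MM = "{M. M \<subseteq> {..<q} \<and> card M = m}"
  have fin: "finite ?SS" "finite ?MM"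
    using finite_subset[OF assms(2,1)] by (auto intro: finite_subset[of _ "Pow _"])
  have "?P (\<Union>S\<in>?SS. \<Union>M\<in>?MM. hashes_within s S M)
          \<le> (\<Sum>S\<in>?SS. ?P (\<Union>M\<in>?MM. hashes_within s S M))"
    using fin by (intro measure_pmf.finite_measure_subadditive_finite) auto
  also have "\<dots> \<le> (\<Sum>S\<in>?SS. \<Sum>M\<in>?MM. ?P (hashes_within s S M))"
    using fin by (intro sum_mono measure_pmf.finite_measure_subadditive_finite) auto
  also have "\<dots> = (\<Sum>S\<in>?SS. \<Sum>M\<in>?MM. (real m / real q) ^ (s * t))"
    using assms by (intro sum.cong refl) (auto simp: prob_hashes_within)
  also have "\<dots> = real (card R choose t) * real (q choose m) * (real m / real q) ^ (s * t)"
    using finite_subset[OF assms(2,1)] by (simp add: n_subsets)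
  finally show ?thesis .
qed

lemma prob_fails_at_least_le:
  assumes "finite E" and "R \<subseteq> E" and "s * card R \<le> q" and "0 < q"
  shows "measure_pmf.prob (pmf_of_set (hash_space E s q)) {H. fails_at_least R s H k}
           \<le> (\<Sum>t\<in>{k..card R}. real (card R choose t) * real (q choose (s * t div 2))
                 * (real (s * t div 2) / real q) ^ (s * t))"
proof -
  define W where "W t = (\<Union>S\<in>{S. S \<subseteq> R \<and> card S = t}.
    \<Union>M\<in>{M. M \<subseteq> {..<q} \<and> card M = s * t div 2}. hashes_within s S M)" for t
  let ?P = "measure_pmf.prob (pmf_of_set (hash_space E s q))"
  have finR: "finite R" using finite_subset[OF assms(2,1)] .
  have incl: "{H. fails_at_least R s H k} \<inter> hash_space E s q \<subseteq> (\<Union>t\<in>{k..card R}. W t)"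
  proof
    fix H assume "H \<in> {H. fails_at_least R s H k} \<inter> hash_space E s q"
    then obtain S M where "S \<subseteq> R" "k \<le> card S" "M \<subseteq> {..<q}" "card M = s * card S div 2"
        "H \<in> hashes_within s S M"
      using fails_at_least_imp_hashes_within[OF finR assms(2) _ assms(3)] by blast
    moreover have "card S \<le> card R" using card_mono[OF finR \<open>S \<subseteq> R\<close>] .
    ultimately show "H \<in> (\<Union>t\<in>{k..card R}. W t)"
      unfolding W_def by (intro UN_I[of "card S"] UN_I[of S] UN_I[of M]) auto
  qed
  have "?P {H. fails_at_least R s H k}
          = ?P ({H. fails_at_least R s H k} \<inter> set_pmf (pmf_of_set (hash_space E s q)))"
    by (rule measure_Int_set_pmf[symmetric])
  also have "\<dots> \<le> ?P (\<Union>t\<in>{k..card R}. W t)"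
    using incl assms(1,4)
    by (intro measure_pmf.finite_measure_mono) (simp_all add: finite_hash_space hash_space_nonempty)
  also have "\<dots> \<le> (\<Sum>t\<in>{k..card R}. ?P (W t))"
    by (intro measure_pmf.finite_measure_subadditive_finite) auto
  also have "\<dots> \<le> (\<Sum>t\<in>{k..card R}. real (card R choose t) * real (q choose (s * t div 2))
                     * (real (s * t div 2) / real q) ^ (s * t))"
    unfolding W_def using assms(1,2,4) by (intro sum_mono prob_some_hashes_within_le)
  finally show ?thesis .
qed

lemma self_power_le_exp_mult_fact: "real n ^ n \<le> exp (real n) * fact n"
proof -
  have "real n ^ n / fact n = (\<Sum>i\<in>{n}. real n ^ i /\<^sub>R fact i)"
    by (simp add: divide_inverse mult.commute)
  also have "\<dots> \<le> (\<Sum>i. real n ^ i /\<^sub>R fact i)"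
    using exp_converges[of "real n"] by (intro sum_le_suminf) (auto dest: sums_summable)
  also have "\<dots> = exp (real n)"
    using exp_converges[of "real n"] by (simp add: sums_iff)
  finally show ?thesis by (simp add: divide_le_eq mult.commute)
qed

lemma binomial_le_exp_ratio_power:
  assumes "0 < k"
  shows "real (n choose k) \<le> (exp 1 * real n / real k) ^ k"
proof -
  have "real (n choose k) * real k ^ k \<le> real (n choose k) * (exp (real k) * fact k)"
    using self_power_le_exp_mult_fact[of k] by (intro mult_left_mono) auto
  also have "\<dots> = exp (real k) * real ((n choose k) * fact k)" by simp
  also have "\<dots> \<le> exp (real k) * real n ^ k"
    by (intro mult_left_mono) (simp_all only: binomial_fact_pow of_nat_le_iff flip: of_nat_power, simp)
  also have "\<dots> = (exp 1 * real n) ^ k"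
    by (simp add: power_mult_distrib flip: exp_of_nat_mult)
  finally show ?thesis
    using assms by (simp add: power_divide le_divide_eq)
qed

lemma binomial_mult_power_le:
  fixes m n q :: nat
  assumes "0 < m" and "2 * m \<le> n"
  shows "real (q choose m) * (real m / real q) ^ n
           \<le> (exp 1 * real n / (2 * real q)) powr (real n / 2)"
proof (cases "m \<le> q")
  case False
  then show ?thesis by (simp add: binomial_eq_0)
next
  case True
  define r where "r = real m / real q"
  have r: "0 < r" "r \<le> 1" using assms(1) True by (auto simp: r_def)
  have m_half: "real m \<le> real n / 2" using assms(2) by linarith
  have "real (q choose m) * r ^ n \<le> (exp 1 / r) ^ m * r ^ n"
    using binomial_le_exp_ratio_power[OF assms(1), of q] r
    by (intro mult_right_mono) (simp_all add: r_def)
  also have "\<dots> = exp 1 ^ m * r ^ (n - m)"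
    using r assms(2) by (simp add: power_divide field_simps flip: power_add)
  also have "\<dots> \<le> exp (real n / 2) * r powr (real n / 2)"
  proof (rule mult_mono)
    show "exp 1 ^ m \<le> exp (real n / 2)"
      using m_half by (simp flip: exp_of_nat_mult)
    show "r ^ (n - m) \<le> r powr (real n / 2)"
      using r assms(2) m_half by (simp add: powr_mono' of_nat_diff flip: powr_realpow)
  qed (use r in auto)
  also have "\<dots> = (exp 1 * r) powr (real n / 2)"
    using r by (subst powr_mult) (auto simp: powr_def)
  also have "\<dots> \<le> (exp 1 * real n / (2 * real q)) powr (real n / 2)"
    using r m_half assms(1) True by (intro powr_mono2) (auto simp: r_def field_simps)
  finally show ?thesis by (simp add: r_def)
qed

lemma binomial_le_trial_ratio_power:
  fixes N p s q t :: nat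
  assumes "0 < s" and "0 < t" and "N \<le> p" and "4 * exp 1 * real s * real p \<le> real q"
  shows "real (N choose t) \<le> (real q / (4 * real s * real t)) ^ t"
proof -
  have "4 * exp 1 * real s * real N \<le> 4 * exp 1 * real s * real p"
    using assms(3) by (intro mult_left_mono) auto
  also note assms(4)
  finally have ratio: "exp 1 * real N / real t \<le> real q / (4 * real s * real t)"
    using assms(1,2) by (simp add: field_simps)
  have "real (N choose t) \<le> (exp 1 * real N / real t) ^ t"
    by (rule binomial_le_exp_ratio_power[OF assms(2)])
  also have "\<dots> \<le> (real q / (4 * real s * real t)) ^ t"
    using ratio by (intro power_mono) auto
  finally show ?thesis .
qed

lemma scaled_self_powr_antimono:
  fixes c x :: real and k t :: nat
  assumes "0 < c" and "1 \<le> k" and "k \<le> t" and "exp 1 * c * t \<le> 1" and "0 \<le> x"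
  shows "(c * t) powr (x * t) \<le> (c * k) powr (x * k)"
proof -
  have k: "real k > 0" using assms(2) by simp
  have "real t / real k \<le> exp ((real t - real k) / real k)"
    using exp_ge_add_one_self[of "(real t - real k) / real k"] k by (simp add: field_simps)
  then have "(real t / real k) ^ k \<le> exp ((real t - real k) / real k) ^ k"
    using k by (intro power_mono) auto
  also have "\<dots> = exp 1 ^ (t - k)"
    using k assms(3) by (simp add: of_nat_diff flip: exp_of_nat_mult)
  finally have ratio: "(real t / real k) ^ k \<le> exp 1 ^ (t - k)" .
  have "(c * t) ^ t = (c * k) ^ k * (real t / real k) ^ k * (c * t) ^ (t - k)"
    using k assms(3) by (simp add: power_mult_distrib power_divide field_simps flip: power_add)
  also have "\<dots> \<le> (c * k) ^ k * exp 1 ^ (t - k) * (c * t) ^ (t - k)"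
    using ratio assms(1) by (intro mult_right_mono mult_left_mono) auto
  also have "\<dots> = (c * k) ^ k * (exp 1 * c * t) ^ (t - k)"
    by (simp add: power_mult_distrib)
  also have "\<dots> \<le> (c * k) ^ k"
    using assms(1,4) by (intro mult_left_le power_le_one) auto
  finally have "((c * t) ^ t) powr x \<le> ((c * k) ^ k) powr x"
    using assms(1,5) by (intro powr_mono2) auto
  then show ?thesis
    using assms(1,2,3) by (simp add: powr_powr mult.commute flip: powr_realpow)
qed

lemma union_bound_term_le_scaled_powr:
  fixes N p s q t :: nat
  assumes "4 \<le> s" and "1 \<le> t" and "t \<le> N" and "N \<le> p"
    and q: "4 * exp 1 * real s * real p \<le> real q"
  defines "c \<equiv> exp 1 * real s / (2 * real q)"
  shows "real (N choose t) * real (q choose (s * t div 2)) * (real (s * t div 2) / real q) ^ (s * t)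
           \<le> (exp 1 / 8) ^ t * (c * t) powr ((real s - 2) / 2 * t)"
proof -
  have "0 < 4 * exp 1 * real s * real p" using assms(1-4) by simp
  then have q_pos: "0 < real q" using q by linarith
  have ct: "0 < c * t" using q_pos assms(1,2) by (simp add: c_def)
  have "4 \<le> s * t" using assms(1,2) by (metis mult_le_mono nat_mult_1_right)
  then have "real (q choose (s * t div 2)) * (real (s * t div 2) / real q) ^ (s * t)
               \<le> (c * t) powr (real s * real t / 2)"
    using binomial_mult_power_le[of "s * t div 2" "s * t" q] by (simp add: c_def mult.assoc)
  moreover have "real (N choose t) \<le> (real q / (4 * real s * real t)) ^ t"
    using binomial_le_trial_ratio_power[OF _ _ assms(4) q] assms(1,2) by simp
  ultimately have "real (N choose t) * real (q choose (s * t div 2)) * (real (s * t div 2) / real q) ^ (s * t)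
      \<le> (real q / (4 * real s * real t)) ^ t * (c * t) powr (real s * real t / 2)"
    by (simp only: mult.assoc) (intro mult_mono, auto)
  also have "\<dots> = (exp 1 / 8) ^ t * (c * t) powr ((real s - 2) / 2 * t)"
  proof -
    have "(c * t) powr (real s * real t / 2) = (c * t) powr (real t + (real s - 2) / 2 * t)"
      by (simp add: field_simps)
    also have "\<dots> = (c * t) ^ t * (c * t) powr ((real s - 2) / 2 * t)"
      using ct by (simp add: powr_add powr_realpow)
    moreover have "real q / (4 * real s * real t) = (exp 1 / 8) / (c * t)"
      using q_pos assms(1,2) by (simp add: c_def field_simps)
    ultimately show ?thesis
      using ct by (auto simp: power_divide)
  qed
  finally show ?thesis .
qed

lemma union_bound_term_le:
  fixes N p s q k t :: nat
  assumes "4 \<le> s" and "1 \<le> k" and "k \<le> t" and "t \<le> N" and "N \<le> p"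
    and q: "4 * exp 1 * real s * real p \<le> real q"
  shows "real (N choose t) * real (q choose (s * t div 2)) * (real (s * t div 2) / real q) ^ (s * t)
           \<le> (1 / 2) ^ t * (2 * real s * real k / real q) powr ((real s - 2) * real k / 2)"
proof -
  define c where "c = exp 1 * real s / (2 * real q)"
  have e: "0 < exp (1::real)" "exp (1::real) \<le> 3" using exp_le by auto
  have t: "1 \<le> t" "t \<le> p" using assms(2-5) by auto
  then have "0 < 4 * exp 1 * real s * real p" using assms(1) by simp
  then have q_pos: "0 < real q" using q by linarith
  have c: "0 < c" using q_pos assms(1) by (simp add: c_def)
  have "exp 1 * c * real t \<le> exp 1 * c * real p" using t c by simp
  also have "\<dots> \<le> exp 1 / 8" using q q_pos by (simp add: c_def field_simps)
  finally have ect: "exp 1 * c * real t \<le> 1" using e(2) by linarith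
  have "real (N choose t) * real (q choose (s * t div 2)) * (real (s * t div 2) / real q) ^ (s * t)
      \<le> (exp 1 / 8) ^ t * (c * t) powr ((real s - 2) / 2 * t)"
    unfolding c_def using union_bound_term_le_scaled_powr[OF assms(1) t(1) assms(4,5) q] .
  also have "\<dots> \<le> (1 / 2) ^ t * (c * k) powr ((real s - 2) / 2 * k)"
  proof (intro mult_mono power_mono)
    show "(c * t) powr ((real s - 2) / 2 * t) \<le> (c * k) powr ((real s - 2) / 2 * k)"
      by (rule scaled_self_powr_antimono[OF c assms(2,3) ect]) (use assms(1) in simp)
  qed (use e in auto)
  also have "\<dots> \<le> (1 / 2) ^ t * (2 * real s * real k / real q) powr ((real s - 2) / 2 * k)"
  proof (intro mult_left_mono powr_mono2)
    have "exp 1 * (real k * real s) \<le> 4 * (real k * real s)" using e(2) by (intro mult_right_mono) auto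
    then show "c * k \<le> 2 * real s * real k / real q" using q_pos by (simp add: c_def field_simps)
  qed (use c assms(1) in auto)
  finally show ?thesis by (simp add: mult.commute)
qed

lemma sum_power_half_le_two: "(\<Sum>t\<in>{k..N}. (1 / 2 :: real) ^ t) \<le> 2"
proof -
  have "(\<Sum>t\<in>{k..N}. (1 / 2 :: real) ^ t) \<le> (\<Sum>t<Suc N. (1 / 2) ^ t)"
    by (rule sum_mono2) auto
  also have "\<dots> = 2 - 2 * (1 / 2) ^ Suc N" by (simp add: sum_gp_strict)
  also have "\<dots> \<le> 2" by simp
  finally show ?thesis .
qed

theorem lemma4p2:
  fixes E R :: "'e set" and p s q k :: nat
  assumes "finite E" and "R \<subseteq> E" and "card R \<le> p"
    and "s \<ge> 4" and "real q \<ge> 4 * exp 1 * real s * real p" and "k > 0"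
  shows "measure_pmf.prob (pmf_of_set (hash_space E s q)) {H. fails_at_least R s H k}
           \<le> 2 * (2 * real s * real k / real q) powr ((real s - 2) * real k / 2)"
proof (cases "k \<le> card R")
  case False
  then have "{H. fails_at_least R s H k} = {}"
    using finite_subset[OF assms(2,1)]
    by (auto simp: fails_at_least_def dest!: peel_reachable_subset dest: card_mono)
  then show ?thesis by simp
next
  case True
  define B where "B = (2 * real s * real k / real q) powr ((real s - 2) * real k / 2)"
  have "real s * real (card R) \<le> 4 * exp 1 * real s * real p"
    using assms(3) exp_ge_add_one_self[of 1] by (intro mult_mono) (auto simp: mult_le_cancel_right1)
  then have sR: "s * card R \<le> q" using assms(5) by (simp flip: of_nat_mult)
  moreover have "0 < s * card R" using assms(4,6) True by simp
  ultimately have "0 < q" by linarith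
  have "measure_pmf.prob (pmf_of_set (hash_space E s q)) {H. fails_at_least R s H k}
      \<le> (\<Sum>t\<in>{k..card R}. (1 / 2) ^ t * B)"
    unfolding B_def using assms sR \<open>0 < q\<close>
    by (intro order_trans[OF prob_fails_at_least_le] sum_mono union_bound_term_le) auto
  also have "\<dots> \<le> 2 * B"
    using sum_power_half_le_two[of k "card R"]
    by (simp add: B_def mult_right_mono flip: sum_distrib_right)
  finally show ?thesis by (simp add: B_def)
qed

end
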